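(* Let $G$ and $H$ be finite groups with $\mathrm{diam}(\Delta(G\times H))\le 2$. Then $\mathrm{diam}(\Delta(G))\le 2$ or $\mathrm{diam}(\Delta(H))\le 2$.
   Context: For a finite group $X$, the cyclic graph $\Delta(X)$ has vertex set $X^{\#}=X\setminus\{1\}$, and distinct vertices $x,y$ are adjacent if and only if the subgroup $\langle x,y\rangle$ is cyclic. The diameter is the maximum graph distance between two vertices, taken to be $\infty$ if the graph is disconnected. *)

theory Defs
  imports "HOL-Algebra.Algebra"
begin

definition cyc_vertices :: "('a, 'b) monoid_scheme \<Rightarrow> 'a set" where
  "cyc_vertices G = carrier G - {\<one>\<^bsub>G\<^esub>}"

definition cyc_adj :: "('a, 'b) monoid_scheme \<Rightarrow> 'a \<Rightarrow> 'a \<Rightarrow> bool" where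
  "cyc_adj G x y \<longleftrightarrow> x \<in> cyc_vertices G \<and> y \<in> cyc_vertices G \<and> x \<noteq> y
     \<and> cyclic_group (subgroup_generated G {x, y})"

definition cyc_walk :: "('a, 'b) monoid_scheme \<Rightarrow> 'a list \<Rightarrow> bool" where
  "cyc_walk G ps \<longleftrightarrow> ps \<noteq> [] \<and> set ps \<subseteq> cyc_vertices G
     \<and> (\<forall>i < length ps - 1. cyc_adj G (ps ! i) (ps ! Suc i))"

definition cyc_dist_le :: "('a, 'b) monoid_scheme \<Rightarrow> 'a \<Rightarrow> 'a \<Rightarrow> nat \<Rightarrow> bool" where
  "cyc_dist_le G x y n \<longleftrightarrow> (\<exists>ps. cyc_walk G ps \<and> hd ps = x \<and> last ps = y \<and> length ps - 1 \<le> n)"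

text \<open>Diameter of the cyclic graph is at most n (a disconnected graph has infinite diameter,
  so it never satisfies this).\<close>
definition cyc_diam_le :: "('a, 'b) monoid_scheme \<Rightarrow> nat \<Rightarrow> bool" where
  "cyc_diam_le G n \<longleftrightarrow> (\<forall>x \<in> cyc_vertices G. \<forall>y \<in> cyc_vertices G. cyc_dist_le G x y n)"

end

theory Submission
  imports Defs
begin

text \<open>Homomorphic images of cyclic groups are cyclic, so a path of length at most 2 from
  (g, h) to (g', h') in the cyclic graph of G \<times> H projects to walks of length at most 2
  from g to g' and from h to h', possibly through the identity. Its middle vertex (a, b)
  is nontrivial in some coordinate, and that coordinate yields a genuine path of length at
  most 2.\<close>

lemma (in group) cyclic_subgroup_generated_hom_image:
  assumes h: "h \<in> hom G H" and "group H" and A: "A \<subseteq> carrier G"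
    and cyc: "cyclic_group (subgroup_generated G A)"
  shows "cyclic_group (subgroup_generated H (h ` A))"
proof -
  interpret h: group_hom G H h
    using h \<open>group H\<close> by (simp add: group_hom_def group_hom_axioms_def is_group)
  have "h ` A \<subseteq> carrier H"
    using A by auto
  then have img: "h ` carrier (subgroup_generated G A) = carrier (subgroup_generated H (h ` A))"
    using A by (simp add: carrier_subgroup_generated Int_absorb1 h.generate_img)
  have "h \<in> hom (subgroup_generated G A) (subgroup_generated H (h ` A))"
    using hom_from_subgroup_generated[OF h] img
    by (simp add: hom_into_subgroup_eq_gen[OF \<open>group H\<close>])
  with img have "h \<in> epi (subgroup_generated G A) (subgroup_generated H (h ` A))"
    by (simp add: epi_def)
  then show ?thesis
    using group.cyclic_group_epimorphic_image[OF group_subgroup_generated] cyc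
      group.group_subgroup_generated[OF \<open>group H\<close>] by blast
qed

lemma cyclic_subgroup_generated_pair_DirProd:
  assumes G: "group G" and H: "group H"
    and pq: "p \<in> carrier (G \<times>\<times> H)" "q \<in> carrier (G \<times>\<times> H)"
    and cyc: "cyclic_group (subgroup_generated (G \<times>\<times> H) {p, q})"
  shows "cyclic_group (subgroup_generated G {fst p, fst q})"
    and "cyclic_group (subgroup_generated H {snd p, snd q})"
proof -
  have GH: "group (G \<times>\<times> H)"
    using G H by (rule DirProd_group)
  have "fst \<in> hom (G \<times>\<times> H) G" and "snd \<in> hom (G \<times>\<times> H) H"
    by (auto simp: hom_def)
  then show "cyclic_group (subgroup_generated G {fst p, fst q})"
    and "cyclic_group (subgroup_generated H {snd p, snd q})"
    using group.cyclic_subgroup_generated_hom_image[OF GH _ _ _ cyc] G H pq by auto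
qed

lemma (in group) cyc_dist_le_2_iff:
  assumes x: "x \<in> cyc_vertices G" and y: "y \<in> cyc_vertices G"
  shows "cyc_dist_le G x y 2 \<longleftrightarrow> (\<exists>m \<in> cyc_vertices G.
           cyclic_group (subgroup_generated G {x, m}) \<and> cyclic_group (subgroup_generated G {m, y}))"
    (is "_ \<longleftrightarrow> (\<exists>m \<in> _. ?linked x m \<and> ?linked m y)")
proof
  have linked_refl: "?linked z z" for z
    by (simp add: cyclic_group_generated)
  assume "cyc_dist_le G x y 2"
  then obtain ps where walk: "cyc_walk G ps" and ends: "hd ps = x" "last ps = y"
    and "length ps \<le> 3"
    unfolding cyc_dist_le_def by fastforce
  then consider "ps = [x]" | "ps = [x, y]" | m where "ps = [x, m, y]"
    by (auto simp: cyc_walk_def numeral_3_eq_3 le_Suc_eq length_Suc_conv)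
  then show "\<exists>m \<in> cyc_vertices G. ?linked x m \<and> ?linked m y"
  proof cases
    case 1
    then show ?thesis
      using ends x linked_refl by (intro bexI[of _ x]) auto
  next
    case 2
    then show ?thesis
      using walk y linked_refl by (auto simp: cyc_walk_def cyc_adj_def)
  next
    case (3 m)
    then show ?thesis
      using walk by (auto simp: cyc_walk_def cyc_adj_def less_Suc_eq numeral_2_eq_2)
  qed
next
  assume "\<exists>m \<in> cyc_vertices G. ?linked x m \<and> ?linked m y"
  then obtain m where m: "m \<in> cyc_vertices G" and xm: "?linked x m" and my: "?linked m y"
    by blast
  consider "x = y" | "x \<noteq> y" "m = x \<or> m = y" | "x \<noteq> y" "m \<noteq> x" "m \<noteq> y"
    by blast
  then have "\<exists>ps. cyc_walk G ps \<and> hd ps = x \<and> last ps = y \<and> length ps \<le> 3"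
  proof cases
    case 1
    then show ?thesis
      using x by (intro exI[of _ "[x]"]) (auto simp: cyc_walk_def)
  next
    case 2
    then show ?thesis
      using x y xm my by (intro exI[of _ "[x, y]"]) (auto simp: cyc_walk_def cyc_adj_def)
  next
    case 3
    then show ?thesis
      using x y m xm my by (intro exI[of _ "[x, m, y]"])
        (auto simp: cyc_walk_def cyc_adj_def less_Suc_eq numeral_2_eq_2)
  qed
  then show "cyc_dist_le G x y 2"
    unfolding cyc_dist_le_def by fastforce
qed

lemma cyc_dist_le_2_DirProd:
  assumes G: "group G" and H: "group H"
    and g: "g \<in> cyc_vertices G" "g' \<in> cyc_vertices G"
    and h: "h \<in> cyc_vertices H" "h' \<in> cyc_vertices H"
    and dist: "cyc_dist_le (G \<times>\<times> H) (g, h) (g', h') 2"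
  shows "cyc_dist_le G g g' 2 \<or> cyc_dist_le H h h' 2"
proof -
  have GH: "group (G \<times>\<times> H)"
    using G H by (rule DirProd_group)
  have "(g, h) \<in> cyc_vertices (G \<times>\<times> H)" "(g', h') \<in> cyc_vertices (G \<times>\<times> H)"
    using g h by (auto simp: cyc_vertices_def)
  then obtain a b where ab: "(a, b) \<in> cyc_vertices (G \<times>\<times> H)"
    and left: "cyclic_group (subgroup_generated (G \<times>\<times> H) {(g, h), (a, b)})"
    and right: "cyclic_group (subgroup_generated (G \<times>\<times> H) {(a, b), (g', h')})"
    using dist group.cyc_dist_le_2_iff[OF GH] by fastforce
  have in_carrier: "(g, h) \<in> carrier (G \<times>\<times> H)" "(g', h') \<in> carrier (G \<times>\<times> H)"
    "(a, b) \<in> carrier (G \<times>\<times> H)"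
    using g h ab by (auto simp: cyc_vertices_def)
  have "a \<in> cyc_vertices G \<or> b \<in> cyc_vertices H"
    using ab by (auto simp: cyc_vertices_def)
  then show ?thesis
    using cyclic_subgroup_generated_pair_DirProd[OF G H in_carrier(1,3) left]
      cyclic_subgroup_generated_pair_DirProd[OF G H in_carrier(3,2) right]
      group.cyc_dist_le_2_iff[OF G g] group.cyc_dist_le_2_iff[OF H h] by auto
qed

theorem theorem4p3:
  fixes G :: "('a, 'c) monoid_scheme" and H :: "('b, 'd) monoid_scheme"
  assumes "group G" and "group H"
    and "finite (carrier G)" and "finite (carrier H)"
    and "cyc_diam_le (G \<times>\<times> H) 2"
  shows "cyc_diam_le G 2 \<or> cyc_diam_le H 2"
proof (rule ccontr)
  assume "\<not> ?thesis"
  then obtain g g' h h' where g: "g \<in> cyc_vertices G" "g' \<in> cyc_vertices G"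
    and h: "h \<in> cyc_vertices H" "h' \<in> cyc_vertices H"
    and far: "\<not> cyc_dist_le G g g' 2" "\<not> cyc_dist_le H h h' 2"
    unfolding cyc_diam_le_def by blast
  have "cyc_dist_le (G \<times>\<times> H) (g, h) (g', h') 2"
    using assms(5) g h unfolding cyc_diam_le_def by (auto simp: cyc_vertices_def)
  then show False
    using cyc_dist_le_2_DirProd[OF assms(1,2) g h] far by blast
qed

end
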